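(* Let $\Gamma$ be a finite graph with right angled Artin group $R(\Gamma)$. If $m(R(\Gamma))\le 3$, then $\Gamma$ contains no induced subgraph isomorphic to a 4-cycle (square).
   Context: For a finite simple graph $\Gamma$, $R(\Gamma)$ is the group with one generator per vertex and relations that generators of adjacent vertices commute. $m(G)$ is the minimal $d$ such that $G$ embeds in $GL(d,\mathbb{F})$ for some field $\mathbb{F}$ ($\infty$ if none). *)

theory Defs
  imports "HOL-Algebra.Group" "Jordan_Normal_Form.Matrix"
begin

definition simple_graph :: "'a set \<Rightarrow> ('a \<Rightarrow> 'a \<Rightarrow> bool) \<Rightarrow> bool" where
  "simple_graph V E \<longleftrightarrow> finite V \<and> (\<forall>u\<in>V. \<forall>v\<in>V. E u v \<longrightarrow> E v u) \<and> (\<forall>v\<in>V. \<not> E v v)"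

text \<open>Words in the generators and their inverses: a letter (v, True) is the
  generator v, a letter (v, False) is its inverse.\<close>

type_synonym 'a word = "('a \<times> bool) list"

definition words :: "'a set \<Rightarrow> 'a word set" where
  "words V = lists (V \<times> UNIV)"

inductive_set raag_eq :: "'a set \<Rightarrow> ('a \<Rightarrow> 'a \<Rightarrow> bool) \<Rightarrow> ('a word \<times> 'a word) set"
  for V E where
  refl: "w \<in> words V \<Longrightarrow> (w, w) \<in> raag_eq V E"
| sym: "(w, w') \<in> raag_eq V E \<Longrightarrow> (w', w) \<in> raag_eq V E"
| trans: "(w, w') \<in> raag_eq V E \<Longrightarrow> (w', w'') \<in> raag_eq V E \<Longrightarrow> (w, w'') \<in> raag_eq V E"
| cancel: "xs \<in> words V \<Longrightarrow> ys \<in> words V \<Longrightarrow> v \<in> V \<Longrightarrow>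
    (xs @ [(v, b), (v, \<not> b)] @ ys, xs @ ys) \<in> raag_eq V E"
| commute: "xs \<in> words V \<Longrightarrow> ys \<in> words V \<Longrightarrow> u \<in> V \<Longrightarrow> v \<in> V \<Longrightarrow> E u v \<Longrightarrow>
    (xs @ [(u, b), (v, c)] @ ys, xs @ [(v, c), (u, b)] @ ys) \<in> raag_eq V E"

definition RAAG :: "'a set \<Rightarrow> ('a \<Rightarrow> 'a \<Rightarrow> bool) \<Rightarrow> 'a word set monoid" where
  "RAAG V E = \<lparr> carrier = words V // raag_eq V E,
      mult = (\<lambda>X Y. raag_eq V E `` {(SOME x. x \<in> X) @ (SOME y. y \<in> Y)}),
      one = raag_eq V E `` {[]} \<rparr>"

definition GL :: "nat \<Rightarrow> 'f::field itself \<Rightarrow> 'f mat monoid" where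
  "GL d ty = units_of (ring_mat ty d ())"

definition has_induced_square :: "'a set \<Rightarrow> ('a \<Rightarrow> 'a \<Rightarrow> bool) \<Rightarrow> bool" where
  "has_induced_square V E \<longleftrightarrow> (\<exists>a\<in>V. \<exists>b\<in>V. \<exists>c\<in>V. \<exists>d\<in>V.
      distinct [a, b, c, d] \<and> E a b \<and> E b c \<and> E c d \<and> E d a \<and> \<not> E a c \<and> \<not> E b d)"

end

theory Submission
  imports Defs "HOL-Algebra.Algebraic_Closure_Type"
begin

text \<open>Suppose \<open>\<Gamma>\<close> contains an induced square \<open>a, b, c, e\<close> (with \<open>a, c\<close> and \<open>b, e\<close> non-adjacent) and
  \<open>R(\<Gamma>)\<close> embeds in \<open>GL(d, F)\<close> with \<open>d \<le> 3\<close>; pass to \<open>3 \<times> 3\<close> matrices over the algebraic closure.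
  The images \<open>X\<^sub>1, X\<^sub>2\<close> of \<open>a, c\<close> commute with the images \<open>Y\<^sub>1, Y\<^sub>2\<close> of \<open>b, e\<close>, while neither pair
  commutes. Triangularising \<open>X\<^sub>1\<close>, either its centralizer is abelian (impossible, it contains
  \<open>Y\<^sub>1, Y\<^sub>2\<close>), or \<open>X\<^sub>1\<close> is a scalar plus a rank-one matrix \<open>u w\<^sup>T\<close>; then the common centralizer of
  \<open>X\<^sub>1\<close> and \<open>X\<^sub>2\<close> preserves a flag, so \<open>Y\<^sub>1, Y\<^sub>2\<close> are simultaneously upper triangular.
  Commutators of upper triangular matrices are unitriangular, and commutators of those are central
  among unitriangular matrices, so \<open>Y\<^sub>1, Y\<^sub>2\<close> satisfy the law
  \<open>[[[y\<^sub>1, y\<^sub>2], [y\<^sub>1\<inverse>, y\<^sub>2]], [y\<^sub>1, y\<^sub>2\<inverse>]] = 1\<close>. But in \<open>R(\<Gamma>)\<close> the generators \<open>b, e\<close> violate it: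
  map them to Sanov's free generators \<open>[[1,2],[0,1]]\<close>, \<open>[[1,0],[2,1]]\<close> and all other generators to
  \<open>1\<close>.\<close>

section \<open>Commutators in monoids\<close>

lemma mult_inverse_cancel_left:
  fixes x :: "'a::monoid_mult"
  shows "x * y = 1 \<Longrightarrow> x * (y * z) = z"
  by (simp flip: mult.assoc)

lemma inverse_pair_mult:
  fixes P :: "'a::monoid_mult"
  shows "P * Q = 1 \<Longrightarrow> P' * Q' = 1 \<Longrightarrow> (P * P') * (Q' * Q) = 1"
  by (simp add: mult.assoc mult_inverse_cancel_left)

lemma conj_mult:
  fixes P :: "'a::monoid_mult"
  shows "P * Q = 1 \<Longrightarrow> Q * A * P * (Q * B * P) = Q * (A * B) * P"
  by (simp add: mult.assoc mult_inverse_cancel_left)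

lemma conj_eq_iff:
  fixes P :: "'a::monoid_mult"
  assumes "P * Q = 1"
  shows "Q * A * P = Q * B * P \<longleftrightarrow> A = B"
proof
  assume "Q * A * P = Q * B * P"
  then have "P * (Q * A * P) * Q = P * (Q * B * P) * Q" by simp
  with assms show "A = B" by (simp add: mult.assoc mult_inverse_cancel_left)
qed simp

text \<open>The primed arguments stand for the inverses: the law is
  \<open>[[[y\<^sub>1, y\<^sub>2], [y\<^sub>1\<inverse>, y\<^sub>2]], [y\<^sub>1, y\<^sub>2\<inverse>]] = 1\<close>,
  written for an arbitrary multiplication so that it applies to words and to matrices alike.\<close>

definition commutator :: "('b \<Rightarrow> 'b \<Rightarrow> 'b) \<Rightarrow> 'b \<Rightarrow> 'b \<Rightarrow> 'b \<Rightarrow> 'b \<Rightarrow> 'b" where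
  "commutator mul x y x' y' = mul x (mul y (mul x' y'))"

definition triangular_law :: "('b \<Rightarrow> 'b \<Rightarrow> 'b) \<Rightarrow> 'b \<Rightarrow> 'b \<Rightarrow> 'b \<Rightarrow> 'b \<Rightarrow> 'b" where
  "triangular_law mul y1 y1' y2 y2' =
     (let c = commutator mul;
          k = c (c y1 y2 y1' y2') (c y1' y2 y1 y2') (c y2 y1 y2' y1') (c y2 y1' y2' y1);
          k' = c (c y1' y2 y1 y2') (c y1 y2 y1' y2') (c y2 y1' y2' y1) (c y2 y1 y2' y1')
      in c k (c y1 y2' y1' y2) k' (c y2' y1 y2 y1'))"

lemma triangular_law_hom:
  assumes closed: "\<And>a b. a \<in> A \<Longrightarrow> b \<in> A \<Longrightarrow> mul a b \<in> A"
    and hom: "\<And>a b. a \<in> A \<Longrightarrow> b \<in> A \<Longrightarrow> F (mul a b) = mul' (F a) (F b)"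
    and "y1 \<in> A" "y1' \<in> A" "y2 \<in> A" "y2' \<in> A"
  shows "F (triangular_law mul y1 y1' y2 y2') = triangular_law mul' (F y1) (F y1') (F y2) (F y2')"
proof -
  have comm: "commutator mul a b c d \<in> A"
      "F (commutator mul a b c d) = commutator mul' (F a) (F b) (F c) (F d)"
    if "a \<in> A" "b \<in> A" "c \<in> A" "d \<in> A" for a b c d
    using that by (simp_all add: commutator_def closed hom)
  show ?thesis
    using assms(3-6) by (simp add: triangular_law_def Let_def comm)
qed

lemma triangular_law_closed:
  assumes "\<And>a b. a \<in> A \<Longrightarrow> b \<in> A \<Longrightarrow> mul a b \<in> A" "y1 \<in> A" "y1' \<in> A" "y2 \<in> A" "y2' \<in> A"
  shows "triangular_law mul y1 y1' y2 y2' \<in> A"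
  using assms by (simp add: triangular_law_def Let_def commutator_def)

lemma commutator_inverse:
  fixes a :: "'a::monoid_mult"
  assumes "a * a' = 1" "a' * a = 1" "b * b' = 1" "b' * b = 1"
  shows "commutator (*) a b a' b' * commutator (*) b a b' a' = 1"
  using assms by (simp add: commutator_def mult.assoc mult_inverse_cancel_left)

lemma triangular_law_conj:
  fixes P Q :: "'a::monoid_mult"
  assumes "P * Q = 1"
  shows "triangular_law (*) (Q * y1 * P) (Q * y1' * P) (Q * y2 * P) (Q * y2' * P) =
    Q * triangular_law (*) y1 y1' y2 y2' * P"
proof -
  have "Q * (a * b) * P = Q * a * P * (Q * b * P)" for a b
    using assms by (simp add: mult.assoc mult_inverse_cancel_left)
  then show ?thesis
    using triangular_law_hom[of UNIV "(*)" "\<lambda>M. Q * M * P" "(*)"] by simp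
qed

text \<open>Explicit \<open>3 \<times> 3\<close> matrices and vectors, so that identities among them follow by case splitting
  and ring normalisation.\<close>

datatype 'a mat3 = Mat3 'a 'a 'a 'a 'a 'a 'a 'a 'a
datatype 'a vec3 = Vec3 'a 'a 'a

instantiation mat3 :: (comm_ring_1) ring_1
begin

definition "0 = Mat3 0 0 0 0 0 0 0 0 0"
definition "1 = Mat3 1 0 0 0 1 0 0 0 1"

fun plus_mat3 where
  "Mat3 a b c d e f g h i + Mat3 a' b' c' d' e' f' g' h' i' =
     Mat3 (a+a') (b+b') (c+c') (d+d') (e+e') (f+f') (g+g') (h+h') (i+i')"

fun minus_mat3 where
  "Mat3 a b c d e f g h i - Mat3 a' b' c' d' e' f' g' h' i' =
     Mat3 (a-a') (b-b') (c-c') (d-d') (e-e') (f-f') (g-g') (h-h') (i-i')"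

fun uminus_mat3 where
  "- Mat3 a b c d e f g h i = Mat3 (-a) (-b) (-c) (-d) (-e) (-f) (-g) (-h) (-i)"

fun times_mat3 where
  "Mat3 a b c d e f g h i * Mat3 a' b' c' d' e' f' g' h' i' =
     Mat3 (a*a'+b*d'+c*g') (a*b'+b*e'+c*h') (a*c'+b*f'+c*i')
          (d*a'+e*d'+f*g') (d*b'+e*e'+f*h') (d*c'+e*f'+f*i')
          (g*a'+h*d'+i*g') (g*b'+h*e'+i*h') (g*c'+h*f'+i*i')"

instance proof
  fix x y z :: "'a mat3"
  show "x * y * z = x * (y * z)" by (cases x; cases y; cases z) (simp add: algebra_simps)
  show "x + y + z = x + (y + z)" by (cases x; cases y; cases z) (simp add: algebra_simps)
  show "x + y = y + x" by (cases x; cases y) (simp add: algebra_simps)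
  show "0 + x = x" by (cases x) (simp add: zero_mat3_def)
  show "- x + x = 0" by (cases x) (simp add: zero_mat3_def)
  show "x - y = x + - y" by (cases x; cases y) simp
  show "1 * x = x" by (cases x) (simp add: one_mat3_def)
  show "x * 1 = x" by (cases x) (simp add: one_mat3_def)
  show "(x + y) * z = x * z + y * z" by (cases x; cases y; cases z) (simp add: algebra_simps)
  show "x * (y + z) = x * y + x * z" by (cases x; cases y; cases z) (simp add: algebra_simps)
  show "(0::'a mat3) \<noteq> 1" by (simp add: zero_mat3_def one_mat3_def)
qed

end

instantiation vec3 :: (ab_group_add) ab_group_add
begin

definition "0 = Vec3 0 0 0"

fun plus_vec3 where "Vec3 a b c + Vec3 a' b' c' = Vec3 (a+a') (b+b') (c+c')"
fun minus_vec3 where "Vec3 a b c - Vec3 a' b' c' = Vec3 (a-a') (b-b') (c-c')"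
fun uminus_vec3 where "- Vec3 a b c = Vec3 (-a) (-b) (-c)"

instance proof
  fix x y z :: "'a vec3"
  show "x + y + z = x + (y + z)" by (cases x; cases y; cases z) (simp add: algebra_simps)
  show "x + y = y + x" by (cases x; cases y) (simp add: algebra_simps)
  show "0 + x = x" by (cases x) (simp add: zero_vec3_def)
  show "- x + x = 0" by (cases x) (simp add: zero_vec3_def)
  show "x - y = x + - y" by (cases x; cases y) simp
qed

end

fun mat_vec :: "'a::comm_ring_1 mat3 \<Rightarrow> 'a vec3 \<Rightarrow> 'a vec3" where
  "mat_vec (Mat3 a b c d e f g h i) (Vec3 x y z) =
     Vec3 (a*x+b*y+c*z) (d*x+e*y+f*z) (g*x+h*y+i*z)"

fun vec_mat :: "'a::comm_ring_1 vec3 \<Rightarrow> 'a mat3 \<Rightarrow> 'a vec3" where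
  "vec_mat (Vec3 x y z) (Mat3 a b c d e f g h i) =
     Vec3 (x*a+y*d+z*g) (x*b+y*e+z*h) (x*c+y*f+z*i)"

fun dot :: "'a::comm_ring_1 vec3 \<Rightarrow> 'a vec3 \<Rightarrow> 'a" where
  "dot (Vec3 x y z) (Vec3 x' y' z') = x*x' + y*y' + z*z'"

fun cross :: "'a::comm_ring_1 vec3 \<Rightarrow> 'a vec3 \<Rightarrow> 'a vec3" where
  "cross (Vec3 x y z) (Vec3 x' y' z') = Vec3 (y*z' - z*y') (z*x' - x*z') (x*y' - y*x')"

fun vscale :: "'a::comm_ring_1 \<Rightarrow> 'a vec3 \<Rightarrow> 'a vec3" where
  "vscale a (Vec3 x y z) = Vec3 (a*x) (a*y) (a*z)"

fun outer :: "'a::comm_ring_1 vec3 \<Rightarrow> 'a vec3 \<Rightarrow> 'a mat3" where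
  "outer (Vec3 x y z) (Vec3 x' y' z') =
     Mat3 (x*x') (x*y') (x*z') (y*x') (y*y') (y*z') (z*x') (z*y') (z*z')"

fun mat3_of_cols :: "'a::comm_ring_1 vec3 \<Rightarrow> 'a vec3 \<Rightarrow> 'a vec3 \<Rightarrow> 'a mat3" where
  "mat3_of_cols (Vec3 a d g) (Vec3 b e h) (Vec3 c f i) = Mat3 a b c d e f g h i"

fun mat3_of_rows :: "'a::comm_ring_1 vec3 \<Rightarrow> 'a vec3 \<Rightarrow> 'a vec3 \<Rightarrow> 'a mat3" where
  "mat3_of_rows (Vec3 a b c) (Vec3 d e f) (Vec3 g h i) = Mat3 a b c d e f g h i"

definition scalar_mat :: "'a::comm_ring_1 \<Rightarrow> 'a mat3" where
  "scalar_mat a = Mat3 a 0 0 0 a 0 0 0 a"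

definition basis1 :: "'a::comm_ring_1 vec3" where "basis1 = Vec3 1 0 0"
definition basis2 :: "'a::comm_ring_1 vec3" where "basis2 = Vec3 0 1 0"
definition basis3 :: "'a::comm_ring_1 vec3" where "basis3 = Vec3 0 0 1"

lemma mat_vec_mult: "mat_vec (A * B) v = mat_vec A (mat_vec B v)"
  by (cases A; cases B; cases v) (simp add: algebra_simps)

lemma vec_mat_mult: "vec_mat z (A * B) = vec_mat (vec_mat z A) B"
  by (cases A; cases B; cases z) (simp add: algebra_simps)

lemma dot_mat_vec: "dot z (mat_vec A v) = dot (vec_mat z A) v"
  by (cases A; cases z; cases v) (simp add: algebra_simps)

lemma mat_vec_one [simp]: "mat_vec 1 v = v"
  by (cases v) (simp add: one_mat3_def)

lemma vec_mat_one [simp]: "vec_mat z 1 = z"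
  by (cases z) (simp add: one_mat3_def)

lemma mat_vec_zero [simp]: "mat_vec A 0 = 0"
  by (cases A) (simp add: zero_vec3_def)

lemma vec_mat_zero [simp]: "vec_mat 0 A = 0"
  by (cases A) (simp add: zero_vec3_def)

lemma mat_vec_diff: "mat_vec (A - B) v = mat_vec A v - mat_vec B v"
  by (cases A; cases B; cases v) (simp add: algebra_simps)

lemma vec_mat_diff: "vec_mat z (A - B) = vec_mat z A - vec_mat z B"
  by (cases A; cases B; cases z) (simp add: algebra_simps)

lemma mat_vec_vscale: "mat_vec A (vscale a v) = vscale a (mat_vec A v)"
  by (cases A; cases v) (simp add: algebra_simps)

lemma vec_mat_vscale: "vec_mat (vscale a z) A = vscale a (vec_mat z A)"
  by (cases A; cases z) (simp add: algebra_simps)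

lemma vscale_vscale: "vscale a (vscale b x) = vscale (a * b) x"
  by (cases x) (simp add: algebra_simps)

lemma vscale_one [simp]: "vscale 1 x = x"
  by (cases x) simp

lemma vscale_zero [simp]: "vscale 0 x = 0" "vscale a 0 = 0"
  by (cases x; simp add: zero_vec3_def)+

lemma vscale_cancel:
  fixes x :: "'a::field vec3"
  shows "a \<noteq> 0 \<Longrightarrow> vscale a x = vscale b y \<Longrightarrow> x = vscale (b / a) y"
  by (cases x; cases y) (auto simp: field_simps)

lemma dot_vscale: "dot (vscale a x) y = a * dot x y" "dot x (vscale a y) = a * dot x y"
  by (cases x; cases y; simp add: algebra_simps)+

lemma dot_zero [simp]: "dot 0 x = 0" "dot x 0 = 0"
  by (cases x; simp add: zero_vec3_def)+

lemma dot_commute: "dot x y = dot y x"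
  by (cases x; cases y) (simp add: algebra_simps)

lemma dot_cross_rotate: "dot x (cross y z) = dot (cross x y) z"
  by (cases x; cases y; cases z) (simp add: algebra_simps)

lemma cross_cross: "cross x (cross y z) = vscale (dot x z) y - vscale (dot x y) z"
  by (cases x; cases y; cases z) (simp add: algebra_simps)

lemma dot_cross_self: "dot x (cross x y) = 0" "dot y (cross x y) = 0"
  by (cases x; cases y; simp add: algebra_simps)+

lemma cross_self [simp]: "cross x x = 0"
  by (cases x) (simp add: zero_vec3_def mult.commute)

lemma cross_commute: "cross y x = - cross x y"
  by (cases x; cases y) (simp add: algebra_simps)

lemma mat_vec_outer: "mat_vec (outer u w) x = vscale (dot w x) u"
  by (cases u; cases w; cases x) (simp add: algebra_simps)

lemma vec_mat_outer: "vec_mat z (outer u w) = vscale (dot z u) w"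
  by (cases u; cases w; cases z) (simp add: algebra_simps)

lemma mult_outer: "A * outer u w = outer (mat_vec A u) w"
  by (cases A; cases u; cases w) (simp add: algebra_simps)

lemma outer_mult: "outer u w * A = outer u (vec_mat w A)"
  by (cases A; cases u; cases w) (simp add: algebra_simps)

lemma outer_vscale: "outer (vscale a u) w = scalar_mat a * outer u w"
    "outer u (vscale a w) = scalar_mat a * outer u w"
  by (cases u; cases w; simp add: scalar_mat_def algebra_simps)+

lemma mat_vec_scalar_mat: "mat_vec (scalar_mat a) v = vscale a v"
  by (cases v) (simp add: scalar_mat_def)

lemma vec_mat_scalar_mat: "vec_mat z (scalar_mat a) = vscale a z"
  by (cases z) (simp add: scalar_mat_def algebra_simps)

lemma scalar_mat_commute: "scalar_mat a * A = A * scalar_mat a"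
  by (cases A) (simp add: scalar_mat_def algebra_simps)

lemma scalar_mat_one [simp]: "scalar_mat 1 = 1"
  by (simp add: scalar_mat_def one_mat3_def)

lemma scalar_mat_mult: "scalar_mat a * scalar_mat b = scalar_mat (a * b)"
  by (simp add: scalar_mat_def)

lemma dot_basis:
  "dot basis1 basis1 = 1" "dot basis2 basis2 = 1" "dot basis3 basis3 = 1"
  "dot basis2 basis1 = 0" "dot basis3 basis1 = 0" "dot basis3 basis2 = 0"
  by (simp_all add: basis1_def basis2_def basis3_def)

lemma cross_basis: "cross basis2 basis3 = basis1" "cross basis3 basis1 = basis2" "cross basis1 basis2 = basis3"
  by (simp_all add: basis1_def basis2_def basis3_def)

lemma basis_neq_zero: "basis1 \<noteq> 0" "basis2 \<noteq> 0" "basis3 \<noteq> 0"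
  by (simp_all add: basis1_def basis2_def basis3_def zero_vec3_def)

lemma mat_vec_mat3_of_cols: "mat_vec (mat3_of_cols p s t) basis1 = p" "mat_vec (mat3_of_cols p s t) basis2 = s"
  by (cases p; cases s; cases t; simp add: basis1_def basis2_def)+

lemma vec_mat_mat3_of_rows: "vec_mat basis3 (mat3_of_rows a b c) = c"
  by (cases a; cases b; cases c) (simp add: basis3_def)

lemma dot_basis_neq_zero:
  assumes "p \<noteq> 0"
  obtains e where "e \<in> {basis1, basis2, basis3}" "dot p e \<noteq> 0"
proof -
  have "\<exists>e\<in>{basis1, basis2, basis3}. dot p e \<noteq> 0"
    using assms by (cases p) (auto simp: basis1_def basis2_def basis3_def zero_vec3_def)
  then show ?thesis using that by blast
qed

lemma cross_neq_zero:
  assumes "r \<noteq> 0"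
  obtains e where "cross r e \<noteq> 0"
proof (cases "cross r basis1 = 0 \<and> cross r basis2 = 0")
  case True
  then have "r = 0" by (cases r) (simp add: basis1_def basis2_def zero_vec3_def)
  with assms show ?thesis by simp
qed (use that in blast)

text \<open>A matrix with columns \<open>p, s, t\<close> is inverted by its adjugate, whose rows are the cross products.\<close>

lemma mat3_of_cols_inverse:
  fixes p s t :: "'a::field vec3"
  defines "D \<equiv> dot p (cross s t)"
  defines "Q \<equiv> scalar_mat (1 / D) * mat3_of_rows (cross s t) (cross t p) (cross p s)"
  assumes "D \<noteq> 0"
  shows "mat3_of_cols p s t * Q = 1" "Q * mat3_of_cols p s t = 1"
proof -
  have adj: "mat3_of_cols p s t * mat3_of_rows (cross s t) (cross t p) (cross p s) = scalar_mat D"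
      "mat3_of_rows (cross s t) (cross t p) (cross p s) * mat3_of_cols p s t = scalar_mat D"
    unfolding D_def by (cases p; cases s; cases t; simp add: scalar_mat_def algebra_simps)+
  have inv: "scalar_mat (1 / D) * scalar_mat D = 1"
    using assms(3) by (simp add: scalar_mat_mult)
  show "Q * mat3_of_cols p s t = 1"
    unfolding Q_def by (simp add: mult.assoc adj inv)
  have "mat3_of_cols p s t * Q = scalar_mat (1 / D) * (mat3_of_cols p s t * mat3_of_rows (cross s t) (cross t p) (cross p s))"
    unfolding Q_def
    by (simp only: mult.assoc[symmetric] scalar_mat_commute[of _ "mat3_of_cols p s t", symmetric])
  then show "mat3_of_cols p s t * Q = 1"
    by (simp add: adj inv)
qed

section \<open>Triangular matrices\<close>

fun upper_triangular3 :: "'a::comm_ring_1 mat3 \<Rightarrow> bool" where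
  "upper_triangular3 (Mat3 a b c d e f g h i) \<longleftrightarrow> d = 0 \<and> g = 0 \<and> h = 0"

fun unitriangular3 :: "'a::comm_ring_1 mat3 \<Rightarrow> bool" where
  "unitriangular3 (Mat3 a b c d e f g h i) \<longleftrightarrow> d = 0 \<and> g = 0 \<and> h = 0 \<and> a = 1 \<and> e = 1 \<and> i = 1"

lemma upper_triangular3_iff:
  "upper_triangular3 M \<longleftrightarrow>
     dot basis2 (mat_vec M basis1) = 0 \<and> dot basis3 (mat_vec M basis1) = 0 \<and> dot basis3 (mat_vec M basis2) = 0"
  by (cases M) (simp add: basis1_def basis2_def basis3_def)

lemma upper_triangular3_inverse:
  fixes A :: "'a::field mat3"
  assumes "upper_triangular3 A" "A * B = 1"
  shows "upper_triangular3 B"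
proof (cases A; cases B)
  fix a b c d e f g h i a' b' c' d' e' f' g' h' i'
  assume A: "A = Mat3 a b c d e f g h i" and B: "B = Mat3 a' b' c' d' e' f' g' h' i'"
  from assms A have "d = 0" "g = 0" "h = 0" by auto
  with assms(2) A B have eqs: "i * g' = 0" "i * h' = 0" "i * i' = 1" "e * d' + f * g' = 0" "e * e' + f * h' = 1"
    by (auto simp: one_mat3_def)
  then have "i \<noteq> 0" by auto
  with eqs have "g' = 0" "h' = 0" by auto
  with eqs have "e * d' = 0" "e * e' = 1" by auto
  then have "d' = 0" by auto
  with \<open>g' = 0\<close> \<open>h' = 0\<close> show ?thesis using B by simp
qed

lemma unitriangular3_inverse:
  fixes A :: "'a::field mat3"
  assumes "unitriangular3 A" "A * B = 1"
  obtains x y z where "A = Mat3 1 x y 0 1 z 0 0 1" "B = Mat3 1 (-x) (x*z - y) 0 1 (-z) 0 0 1"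
proof -
  obtain x y z where A: "A = Mat3 1 x y 0 1 z 0 0 1"
    using assms(1) by (cases A) auto
  have "upper_triangular3 B"
    using upper_triangular3_inverse[OF _ assms(2)] A by simp
  then obtain a b c e f i where B: "B = Mat3 a b c 0 e f 0 0 i"
    by (cases B) auto
  have eqs: "a = 1" "b + x * e = 0" "c + x * f + y * i = 0" "e = 1" "f + z * i = 0" "i = 1"
    using assms(2) by (auto simp: A B one_mat3_def)
  then have "b = - x" "f = - z" "c = x * z - y"
    by (simp_all add: add_eq_0_iff2 algebra_simps)
  with eqs have "B = Mat3 1 (-x) (x*z - y) 0 1 (-z) 0 0 1"
    by (simp add: B)
  with A show ?thesis by (rule that)
qed

lemma commutator_upper_triangular3_unitriangular:
  fixes g :: "'a::field mat3"
  assumes "upper_triangular3 g" "upper_triangular3 h" "g * g' = 1" "h * h' = 1"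
  shows "unitriangular3 (commutator (*) g h g' h')"
proof -
  have "upper_triangular3 g'" "upper_triangular3 h'"
    using assms upper_triangular3_inverse by blast+
  with assms show ?thesis
  proof (cases g; cases h; cases g'; cases h')
    fix a b c d e f a' b' c' d' e' f' a2 b2 c2 d2 e2 f2 a3 b3 c3 d3 e3 f3 x1 x2 x3 y1 y2 y3 z1 z2 z3 w1 w2 w3
    assume g: "g = Mat3 a b c x1 d e x2 x3 f" and h: "h = Mat3 a' b' c' y1 d' e' y2 y3 f'"
      and g': "g' = Mat3 a2 b2 c2 z1 d2 e2 z2 z3 f2" and h': "h' = Mat3 a3 b3 c3 w1 d3 e3 w2 w3 f3"
    from assms \<open>upper_triangular3 g'\<close> \<open>upper_triangular3 h'\<close> g h g' h'
    have z: "x1 = 0" "x2 = 0" "x3 = 0" "y1 = 0" "y2 = 0" "y3 = 0"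
      "z1 = 0" "z2 = 0" "z3 = 0" "w1 = 0" "w2 = 0" "w3 = 0" by auto
    with assms(3,4) g h g' h' have "a * a2 = 1" "d * d2 = 1" "f * f2 = 1" "a' * a3 = 1" "d' * d3 = 1" "f' * f3 = 1"
      by (auto simp: one_mat3_def)
    then show ?thesis using g h g' h' z
      by (simp add: commutator_def algebra_simps, intro conjI; metis mult.commute mult.left_commute mult_1_right)
  qed
qed

lemma commutator_unitriangular3_central:
  fixes c1 :: "'a::field mat3"
  assumes "unitriangular3 c1" "unitriangular3 c2" "c1 * c1' = 1" "c2 * c2' = 1"
  obtains x where "commutator (*) c1 c2 c1' c2' = Mat3 1 0 x 0 1 0 0 0 1"
proof -
  obtain x y z where 1: "c1 = Mat3 1 x y 0 1 z 0 0 1" "c1' = Mat3 1 (-x) (x*z - y) 0 1 (-z) 0 0 1"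
    using unitriangular3_inverse[OF assms(1,3)] by blast
  obtain x' y' z' where 2: "c2 = Mat3 1 x' y' 0 1 z' 0 0 1" "c2' = Mat3 1 (-x') (x'*z' - y') 0 1 (-z') 0 0 1"
    using unitriangular3_inverse[OF assms(2,4)] by blast
  have "commutator (*) c1 c2 c1' c2' = Mat3 1 0 (x*z' - x'*z) 0 1 0 0 0 1"
    unfolding 1 2 commutator_def by (simp add: algebra_simps)
  then show ?thesis by (rule that)
qed

lemma central_commute_unitriangular3:
  fixes x :: "'a::comm_ring_1"
  shows "unitriangular3 U \<Longrightarrow> Mat3 1 0 x 0 1 0 0 0 1 * U = U * Mat3 1 0 x 0 1 0 0 0 1"
  by (cases U) auto

lemma triangular_law_upper_triangular3:
  fixes y1 :: "'a::field mat3"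
  assumes "upper_triangular3 y1" "upper_triangular3 y2"
    and inv: "y1 * y1' = 1" "y1' * y1 = 1" "y2 * y2' = 1" "y2' * y2 = 1"
  shows "triangular_law (*) y1 y1' y2 y2' = 1"
proof -
  have upper': "upper_triangular3 y1'" "upper_triangular3 y2'"
    using assms upper_triangular3_inverse by blast+
  let ?c = "commutator ((*) :: 'a mat3 \<Rightarrow> _ \<Rightarrow> _)"
  have unitriangular: "unitriangular3 (?c a b a' b')"
    if "a \<in> {y1, y1'}" "b \<in> {y2, y2'}" "a * a' = 1" "b * b' = 1" for a b a' b'
    using that assms upper' by (auto intro!: commutator_upper_triangular3_unitriangular)
  define c1 c2 c3 where "c1 = ?c y1 y2 y1' y2'" and "c2 = ?c y1' y2 y1 y2'" and "c3 = ?c y1 y2' y1' y2"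
  define c1' c2' c3' where "c1' = ?c y2 y1 y2' y1'" and "c2' = ?c y2 y1' y2' y1" and "c3' = ?c y2' y1 y2 y1'"
  have inverses: "c1 * c1' = 1" "c1' * c1 = 1" "c2 * c2' = 1" "c2' * c2 = 1" "c3 * c3' = 1"
    unfolding c1_def c2_def c3_def c1'_def c2'_def c3'_def using inv by (simp_all add: commutator_inverse)
  have "unitriangular3 c1" "unitriangular3 c2" "unitriangular3 c3"
    unfolding c1_def c2_def c3_def using inv by (simp_all add: unitriangular)
  then obtain x where central: "?c c1 c2 c1' c2' = Mat3 1 0 x 0 1 0 0 0 1"
    using commutator_unitriangular3_central[of c1 c2 c1' c2'] inverses by metis
  define k k' where "k = ?c c1 c2 c1' c2'" and "k' = ?c c2 c1 c2' c1'"
  have "k * c3 = c3 * k"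
    unfolding k_def central using central_commute_unitriangular3 \<open>unitriangular3 c3\<close> by blast
  then have "triangular_law (*) y1 y1' y2 y2' = c3 * ((k * k') * c3')"
    unfolding triangular_law_def c1_def c2_def c3_def c1'_def c2'_def c3'_def k_def k'_def
    by (simp add: commutator_def) (simp flip: mult.assoc)
  also have "k * k' = 1"
    unfolding k_def k'_def by (rule commutator_inverse[OF inverses(1-4)])
  finally show ?thesis
    using inverses by simp
qed

text \<open>The flag is the line spanned by \<open>p\<close> inside the plane orthogonal to \<open>z\<close>.\<close>

definition preserves_flag :: "'a::comm_ring_1 vec3 \<Rightarrow> 'a vec3 \<Rightarrow> 'a mat3 \<Rightarrow> bool" where
  "preserves_flag p z Y \<longleftrightarrow> (\<exists>\<alpha>. mat_vec Y p = vscale \<alpha> p) \<and> (\<exists>\<beta>. vec_mat z Y = vscale \<beta> z)"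

lemma flag_conj_upper_triangular3:
  fixes p z :: "'a::field vec3"
  assumes "p \<noteq> 0" "z \<noteq> 0" "dot z p = 0"
  obtains P Q where "P * Q = 1" "Q * P = 1" "\<And>Y. preserves_flag p z Y \<Longrightarrow> upper_triangular3 (Q * Y * P)"
proof -
  obtain ei where ei: "dot p ei \<noteq> 0"
    using dot_basis_neq_zero[OF assms(1)] by metis
  obtain ek where ek: "dot z ek \<noteq> 0"
    using dot_basis_neq_zero[OF assms(2)] by metis
  define s where "s = cross z ei"
  have cross_ps: "cross p s = vscale (dot p ei) z"
    unfolding s_def cross_cross using assms(3) by (simp add: dot_commute)
  define D where "D = dot p (cross s ek)"
  have "D = dot p ei * dot z ek"
    unfolding D_def dot_cross_rotate cross_ps dot_vscale ..
  with ei ek have "D \<noteq> 0" by simp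
  define P where "P = mat3_of_cols p s ek"
  define Q where "Q = scalar_mat (1 / D) * mat3_of_rows (cross s ek) (cross ek p) (cross p s)"
  have PQ: "P * Q = 1" "Q * P = 1"
    using mat3_of_cols_inverse[of p s ek] \<open>D \<noteq> 0\<close> unfolding P_def Q_def D_def by simp_all
  have row3: "vec_mat basis3 Q = vscale (1 / D * dot p ei) z"
    unfolding Q_def vec_mat_mult vec_mat_scalar_mat vec_mat_vscale vec_mat_mat3_of_rows cross_ps vscale_vscale ..
  have zs: "dot z s = 0"
    unfolding s_def by (simp add: dot_cross_self)
  have "upper_triangular3 (Q * Y * P)" if Y: "preserves_flag p z Y" for Y
  proof -
    obtain \<alpha> \<beta> where \<alpha>: "mat_vec Y p = vscale \<alpha> p" and \<beta>: "vec_mat z Y = vscale \<beta> z"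
      using Y unfolding preserves_flag_def by blast
    have "mat_vec (Q * Y * P) basis1 = vscale \<alpha> (mat_vec (Q * P) basis1)"
      by (simp add: mat_vec_mult P_def mat_vec_mat3_of_cols \<alpha> mat_vec_vscale)
    then have col1: "mat_vec (Q * Y * P) basis1 = vscale \<alpha> basis1"
      using PQ by simp
    have "dot basis3 (mat_vec (Q * Y * P) basis2) = dot (vec_mat basis3 Q) (mat_vec Y s)"
      by (simp add: mat_vec_mult P_def mat_vec_mat3_of_cols dot_mat_vec)
    also have "\<dots> = 1 / D * dot p ei * (\<beta> * dot z s)"
      by (simp only: row3 dot_mat_vec vec_mat_vscale \<beta> dot_vscale vscale_vscale) (simp add: algebra_simps)
    finally show ?thesis
      unfolding upper_triangular3_iff col1 using zs by (simp add: dot_vscale dot_basis)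
  qed
  with PQ show ?thesis by (rule that)
qed

definition simult_triangularizable :: "'a::comm_ring_1 mat3 \<Rightarrow> 'a mat3 \<Rightarrow> bool" where
  "simult_triangularizable Y1 Y2 \<longleftrightarrow>
     (\<exists>P Q. P * Q = 1 \<and> Q * P = 1 \<and> upper_triangular3 (Q * Y1 * P) \<and> upper_triangular3 (Q * Y2 * P))"

lemma simult_triangularizable_conj:
  assumes "P * Q = 1" "Q * P = 1" "simult_triangularizable (Q * Y1 * P) (Q * Y2 * P)"
  shows "simult_triangularizable Y1 Y2"
proof -
  obtain P' Q' where "P' * Q' = 1" "Q' * P' = 1"
      "upper_triangular3 (Q' * (Q * Y1 * P) * P')" "upper_triangular3 (Q' * (Q * Y2 * P) * P')"
    using assms(3) unfolding simult_triangularizable_def by blast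
  moreover have "(P * P') * (Q' * Q) = 1" "(Q' * Q) * (P * P') = 1"
    using assms(1,2) \<open>P' * Q' = 1\<close> \<open>Q' * P' = 1\<close> by (simp_all add: inverse_pair_mult)
  moreover have "Q' * Q * Y * (P * P') = Q' * (Q * Y * P) * P'" for Y
    by (simp add: mult.assoc)
  ultimately show ?thesis
    unfolding simult_triangularizable_def by metis
qed

lemma simult_triangularizable_flag:
  fixes p z :: "'a::field vec3"
  assumes "p \<noteq> 0" "z \<noteq> 0" "dot z p = 0" "preserves_flag p z Y1" "preserves_flag p z Y2"
  shows "simult_triangularizable Y1 Y2"
  using flag_conj_upper_triangular3[OF assms(1-3)] assms(4,5)
  unfolding simult_triangularizable_def by metis

lemma triangular_law_simult_triangularizable:
  fixes Y1 :: "'a::field mat3"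
  assumes "simult_triangularizable Y1 Y2"
    and inv: "Y1 * Y1' = 1" "Y1' * Y1 = 1" "Y2 * Y2' = 1" "Y2' * Y2 = 1"
  shows "triangular_law (*) Y1 Y1' Y2 Y2' = 1"
proof -
  obtain P Q where PQ: "P * Q = 1" "Q * P = 1"
    and upper: "upper_triangular3 (Q * Y1 * P)" "upper_triangular3 (Q * Y2 * P)"
    using assms(1) unfolding simult_triangularizable_def by blast
  have "Q * triangular_law (*) Y1 Y1' Y2 Y2' * P = Q * 1 * P"
    using triangular_law_upper_triangular3[OF upper] inv
    by (simp add: triangular_law_conj[OF PQ(1), symmetric] conj_mult[OF PQ(1)] PQ(2))
  then show ?thesis
    unfolding conj_eq_iff[OF PQ(1)] .
qed

section \<open>Triangularisation over algebraically closed fields\<close>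

fun det3 :: "'a::comm_ring_1 mat3 \<Rightarrow> 'a" where
  "det3 (Mat3 a b c d e f g h i) = a * (e*i - f*h) - b * (d*i - f*g) + c * (d*h - e*g)"

lemma mat_vec_mat3_of_rows: "mat_vec (mat3_of_rows r1 r2 r3) v = Vec3 (dot r1 v) (dot r2 v) (dot r3 v)"
  by (cases r1; cases r2; cases r3; cases v) (simp add: algebra_simps)

lemma det3_mat3_of_rows: "det3 (mat3_of_rows r1 r2 r3) = dot r1 (cross r2 r3)"
  by (cases r1; cases r2; cases r3) (simp add: algebra_simps)

lemma mat3_of_rows_cases:
  obtains r1 r2 r3 where "M = mat3_of_rows r1 r2 r3"
  by (cases M) (metis mat3_of_rows.simps)

lemma det3_eq_0_kernel:
  fixes M :: "'a::field mat3"
  assumes "det3 M = 0"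
  obtains v where "v \<noteq> 0" "mat_vec M v = 0"
proof -
  obtain r1 r2 r3 where M: "M = mat3_of_rows r1 r2 r3"
    by (rule mat3_of_rows_cases)
  have d: "dot r1 (cross r2 r3) = 0" "dot r2 (cross r3 r1) = 0" "dot r3 (cross r1 r2) = 0"
    using assms unfolding M det3_mat3_of_rows by (metis dot_cross_rotate dot_commute)+
  have kernel: "mat_vec M v = 0" if "dot r1 v = 0" "dot r2 v = 0" "dot r3 v = 0" for v
    using that by (simp add: M mat_vec_mat3_of_rows zero_vec3_def)
  show ?thesis
  proof (cases "cross r1 r2 = 0 \<and> cross r2 r3 = 0 \<and> cross r3 r1 = 0")
    case False
    then consider "cross r1 r2 \<noteq> 0" | "cross r2 r3 \<noteq> 0" | "cross r3 r1 \<noteq> 0" by blast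
    then show ?thesis
    proof cases
      case 1
      show ?thesis by (rule that[OF 1 kernel]) (simp_all add: dot_cross_self d)
    next
      case 2
      show ?thesis by (rule that[OF 2 kernel]) (simp_all add: dot_cross_self d)
    next
      case 3
      show ?thesis by (rule that[OF 3 kernel]) (simp_all add: dot_cross_self d)
    qed
  next
    case parallel: True
    have "cross r' r = 0" if "r' \<in> {r1, r2, r3}" "r \<in> {r1, r2, r3}" for r' r
      using that parallel cross_commute[of r1 r2] cross_commute[of r2 r3] cross_commute[of r3 r1] by auto
    then have orth: "dot r' (cross r e) = 0" if "r' \<in> {r1, r2, r3}" "r \<in> {r1, r2, r3}" for r' r e
      using that by (simp add: dot_cross_rotate)
    show ?thesis
    proof (cases "r1 = 0 \<and> r2 = 0 \<and> r3 = 0")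
      case True
      then show ?thesis
        using that kernel basis_neq_zero(1) by simp
    next
      case False
      then obtain r where "r \<in> {r1, r2, r3}" "r \<noteq> 0" by blast
      moreover obtain e where "cross r e \<noteq> 0"
        using cross_neq_zero[OF \<open>r \<noteq> 0\<close>] by blast
      ultimately show ?thesis
        using that kernel orth by simp
    qed
  qed
qed

lemma monic_cubic_has_root:
  fixes a b c :: "'a::alg_closed_field"
  obtains x where "x^3 + a * x^2 + b * x + c = 0"
proof -
  have "\<exists>x. poly [:c, b, a, 1:] x = 0"
    by (rule alg_closed_imp_poly_has_root) simp
  then show ?thesis
    using that by (auto simp: algebra_simps power2_eq_square power3_eq_cube)
qed

lemma monic_quadratic_has_root:
  fixes a b :: "'a::alg_closed_field"
  obtains x where "x^2 + a * x + b = 0"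
proof -
  have "\<exists>x. poly [:b, a, 1:] x = 0"
    by (rule alg_closed_imp_poly_has_root) simp
  then show ?thesis
    using that by (auto simp: algebra_simps power2_eq_square)
qed

lemma mat3_eigenvector:
  fixes A :: "'a::alg_closed_field mat3"
  obtains l v where "v \<noteq> 0" "mat_vec A v = vscale l v"
proof -
  obtain a b c d e f g h i where A: "A = Mat3 a b c d e f g h i"
    by (cases A)
  define tr where "tr = a + e + i"
  define m where "m = (a*e - b*d) + (a*i - c*g) + (e*i - f*h)"
  obtain x where "x^3 + (- tr) * x^2 + m * x + (- det3 A) = 0"
    by (rule monic_cubic_has_root)
  then have char: "x^3 - tr * x^2 + m * x - det3 A = 0"
    by simp
  have "det3 (A - scalar_mat x) = - (x^3 - tr * x^2 + m * x - det3 A)"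
    unfolding tr_def m_def A by (simp add: scalar_mat_def algebra_simps power3_eq_cube power2_eq_square)
  with char have "det3 (A - scalar_mat x) = 0"
    by simp
  then obtain v where "v \<noteq> 0" "mat_vec (A - scalar_mat x) v = 0"
    by (rule det3_eq_0_kernel)
  then show ?thesis
    using that by (simp add: mat_vec_diff mat_vec_scalar_mat)
qed

lemma block_left_eigenvector:
  fixes l :: "'a::alg_closed_field"
  obtains z \<mu> where "z \<noteq> 0" "dot z basis1 = 0" "vec_mat z (Mat3 l a b 0 p q 0 r s) = vscale \<mu> z"
proof -
  obtain \<mu> where \<mu>: "\<mu>^2 + (- (p + s)) * \<mu> + (p * s - q * r) = 0"
    by (rule monic_quadratic_has_root)
  have det: "(p - \<mu>) * (s - \<mu>) - q * r = 0"
    using \<mu> by (simp add: algebra_simps power2_eq_square)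
  obtain z2 z3 where z: "z2 \<noteq> 0 \<or> z3 \<noteq> 0" "z2 * (p - \<mu>) + z3 * r = 0" "z2 * q + z3 * (s - \<mu>) = 0"
  proof (cases "r \<noteq> 0 \<or> p - \<mu> \<noteq> 0")
    case True
    with det show ?thesis
      by (intro that[of r "- (p - \<mu>)"]) (auto simp: algebra_simps)
  next
    case False
    show ?thesis
    proof (cases "s - \<mu> \<noteq> 0 \<or> q \<noteq> 0")
      case True
      with det False show ?thesis
        by (intro that[of "s - \<mu>" "- q"]) (auto simp: algebra_simps)
    next
      case False
      with \<open>\<not> (r \<noteq> 0 \<or> p - \<mu> \<noteq> 0)\<close> show ?thesis
        by (intro that[of 1 0]) auto
    qed
  qed
  have "Vec3 0 z2 z3 \<noteq> 0" "dot (Vec3 0 z2 z3) basis1 = 0"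
    "vec_mat (Vec3 0 z2 z3) (Mat3 l a b 0 p q 0 r s) = vscale \<mu> (Vec3 0 z2 z3)"
    using z by (auto simp: zero_vec3_def basis1_def algebra_simps)
  then show ?thesis by (rule that)
qed

lemma basis1_image:
  fixes v :: "'a::field vec3"
  assumes "v \<noteq> 0"
  obtains P Q where "P * Q = 1" "Q * P = 1" "mat_vec P basis1 = v"
proof -
  obtain e where "e \<in> {basis1, basis2, basis3}" "dot v e \<noteq> 0"
    using dot_basis_neq_zero[OF assms] .
  then obtain s t where "dot v (cross s t) \<noteq> 0"
    using cross_basis by (metis insert_iff empty_iff)
  then show ?thesis
    using that mat3_of_cols_inverse[of v s t] mat_vec_mat3_of_cols(1)[of v s t] by blast
qed

lemma conj_upper_triangular3:
  fixes A :: "'a::alg_closed_field mat3"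
  obtains P Q where "P * Q = 1" "Q * P = 1" "upper_triangular3 (Q * A * P)"
proof -
  obtain l v where v: "v \<noteq> 0" "mat_vec A v = vscale l v"
    by (rule mat3_eigenvector)
  obtain P Q where PQ: "P * Q = 1" "Q * P = 1" "mat_vec P basis1 = v"
    using basis1_image[OF v(1)] .
  have "mat_vec (Q * A * P) basis1 = vscale l (mat_vec (Q * P) basis1)"
    by (simp add: mat_vec_mult PQ(3) v(2) mat_vec_vscale)
  then obtain a b p q r s where A': "Q * A * P = Mat3 l a b 0 p q 0 r s"
    using PQ(2) by (cases "Q * A * P") (auto simp: basis1_def)
  obtain z \<mu> where z: "z \<noteq> 0" "dot z basis1 = 0" "vec_mat z (Q * A * P) = vscale \<mu> z"
    using block_left_eigenvector unfolding A' by metis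
  have "preserves_flag basis1 z (Q * A * P)"
    unfolding preserves_flag_def using z(3) by (auto simp: A' basis1_def)
  then obtain P' Q' where "P' * Q' = 1" "Q' * P' = 1" "upper_triangular3 (Q' * (Q * A * P) * P')"
    using flag_conj_upper_triangular3[OF basis_neq_zero(1) z(1,2)] by metis
  moreover have "Q' * (Q * A * P) * P' = (Q' * Q) * A * (P * P')"
    by (simp add: mult.assoc)
  ultimately show ?thesis
    using that PQ inverse_pair_mult by metis
qed

text \<open>Conjugating by a unitriangular matrix clears each entry above the diagonal whose row and
  column carry different diagonal entries.\<close>

lemma upper_triangular3_conj_normal:
  fixes T :: "'a::field mat3"
  assumes "upper_triangular3 T"
  obtains P Q a b c d e f where "P * Q = 1" "Q * P = 1" "Q * T * P = Mat3 a b c 0 d e 0 0 f"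
    "a \<noteq> d \<Longrightarrow> b = 0" "a \<noteq> f \<Longrightarrow> c = 0" "d \<noteq> f \<Longrightarrow> e = 0"
proof -
  obtain a b c d e f where T: "T = Mat3 a b c 0 d e 0 0 f"
    using assms by (cases T) auto
  define u where "u = (if a = d then 0 else b / (d - a))"
  define w where "w = (if d = f then 0 else e / (f - d))"
  define r where "r = c + b * w - u * (d * w + e) + u * w * f"
  define v where "v = (if a = f then 0 else r / (f - a))"
  let ?P = "Mat3 1 u v 0 1 w 0 0 1" and ?Q = "Mat3 1 (-u) (u * w - v) 0 1 (-w) 0 0 1"
  have "?P * ?Q = 1" "?Q * ?P = 1"
    by (simp_all add: one_mat3_def algebra_simps)
  moreover have "?Q * T * ?P = Mat3 a (b + u * (a - d)) (r + v * (a - f)) 0 d (e + w * (d - f)) 0 0 f"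
    unfolding T r_def by (simp add: ring_distribs)
  moreover have "a \<noteq> d \<Longrightarrow> b + u * (a - d) = 0" "a \<noteq> f \<Longrightarrow> r + v * (a - f) = 0"
      "d \<noteq> f \<Longrightarrow> e + w * (d - f) = 0"
    unfolding u_def v_def w_def by (simp_all add: field_simps)
  ultimately show ?thesis
    by (rule that)
qed

section \<open>Centralizers\<close>

lemma mat3_all: "(\<forall>Y. P Y) \<longleftrightarrow> (\<forall>a b c d e f g h i. P (Mat3 a b c d e f g h i))"
  by (metis mat3.exhaust)

definition abelian_centralizer :: "'a::comm_ring_1 mat3 \<Rightarrow> bool" where
  "abelian_centralizer T \<longleftrightarrow> (\<forall>Y1 Y2. T * Y1 = Y1 * T \<longrightarrow> T * Y2 = Y2 * T \<longrightarrow> Y1 * Y2 = Y2 * Y1)"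

lemma abelian_centralizer_regular_nilpotent_part:
  fixes a :: "'a::field"
  assumes "b \<noteq> 0" "e \<noteq> 0"
  shows "abelian_centralizer (Mat3 a b c 0 a e 0 0 a)"
  using assms unfolding abelian_centralizer_def mat3_all
  by (auto simp: algebra_simps) (metis mult.commute mult.left_commute mult_left_cancel)

lemma normal_form_rank_one_or_abelian_centralizer:
  fixes a b c d e f :: "'a::field"
  defines "T \<equiv> Mat3 a b c 0 d e 0 0 f"
  assumes normal: "a \<noteq> d \<Longrightarrow> b = 0" "a \<noteq> f \<Longrightarrow> c = 0" "d \<noteq> f \<Longrightarrow> e = 0"
  shows "(\<exists>l u w. T = scalar_mat l + outer u w) \<or> abelian_centralizer T"
proof -
  have rank_one: "\<exists>l u w. T = scalar_mat l + outer u w" if "T = scalar_mat l + outer u w" for l u w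
    using that by blast
  consider "a = d" "a = f" | "a = d" "a \<noteq> f" | "a \<noteq> d" "a = f" | "a \<noteq> d" "d = f" | "a \<noteq> d" "a \<noteq> f" "d \<noteq> f"
    by blast
  then show ?thesis
  proof cases
    case 1
    show ?thesis
    proof (cases "b = 0 \<or> e = 0")
      case True
      then show ?thesis
        using 1 rank_one[of a "Vec3 c e 0" basis3] rank_one[of a basis1 "Vec3 0 b c"]
        by (auto simp: T_def scalar_mat_def basis1_def basis3_def)
    next
      case False
      then show ?thesis
        using 1 abelian_centralizer_regular_nilpotent_part[of b e a c] by (simp add: T_def)
    qed
  next
    case 2
    then show ?thesis
      using normal rank_one[of a "Vec3 0 0 (f - a)" basis3]
      by (cases "b = 0") (auto simp: T_def scalar_mat_def basis3_def abelian_centralizer_def mat3_all algebra_simps)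
  next
    case 3
    then show ?thesis
      using normal rank_one[of a "Vec3 0 (d - a) 0" basis2]
      by (cases "c = 0") (auto simp: T_def scalar_mat_def basis2_def abelian_centralizer_def mat3_all algebra_simps)
  next
    case 4
    then show ?thesis
      using normal rank_one[of d "Vec3 (a - d) 0 0" basis1]
      by (cases "e = 0") (auto simp: T_def scalar_mat_def basis1_def abelian_centralizer_def mat3_all algebra_simps)
  next
    case 5
    then show ?thesis
      using normal
      by (auto simp: T_def abelian_centralizer_def mat3_all algebra_simps)
  qed
qed

lemma outer_eq_outer:
  fixes u :: "'a::field vec3"
  assumes "u \<noteq> 0" "w \<noteq> 0" "outer x w = outer u y"
  obtains \<alpha> where "x = vscale \<alpha> u" "y = vscale \<alpha> w"
proof -
  obtain ek where ek: "dot w ek \<noteq> 0"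
    using dot_basis_neq_zero[OF assms(2)] by metis
  obtain ei where ei: "dot u ei \<noteq> 0"
    using dot_basis_neq_zero[OF assms(1)] by metis
  have "vscale (dot w ek) x = vscale (dot y ek) u"
    using arg_cong[OF assms(3), of "\<lambda>M. mat_vec M ek"] by (simp add: mat_vec_outer)
  then have x: "x = vscale (dot y ek / dot w ek) u"
    using vscale_cancel ek by blast
  have "vscale (dot ei u) y = vscale (dot ei x) w"
    using arg_cong[OF assms(3), of "\<lambda>M. vec_mat ei M"] by (simp add: vec_mat_outer)
  then have y: "y = vscale (dot ei x / dot ei u) w"
    using vscale_cancel ei dot_commute by metis
  have "dot ei x / dot ei u = dot y ek / dot w ek"
    using ei by (simp add: x dot_vscale dot_commute)
  with x y show ?thesis
    using that by metis
qed

lemma commute_scalar_plus_outer: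
  fixes Y :: "'a::field mat3"
  assumes "(scalar_mat l + outer u w) * Y = Y * (scalar_mat l + outer u w)" "u \<noteq> 0" "w \<noteq> 0"
  obtains \<alpha> where "mat_vec Y u = vscale \<alpha> u" "vec_mat w Y = vscale \<alpha> w"
proof -
  have "Y * outer u w = outer u w * Y"
    using assms(1) by (simp add: algebra_simps scalar_mat_commute)
  then have "outer (mat_vec Y u) w = outer u (vec_mat w Y)"
    by (simp add: mult_outer outer_mult)
  then show ?thesis
    using outer_eq_outer[OF assms(2,3)] that by metis
qed

text \<open>If \<open>w \<bullet> u \<noteq> 0\<close>, the projection \<open>\<pi>\<close> onto the plane \<open>w\<^sup>\<perp>\<close> along \<open>u\<close> commutes with the centralizer
  of \<open>X\<^sub>1\<close>; then \<open>\<pi> X\<^sub>2 u\<close> spans a line in \<open>w\<^sup>\<perp>\<close>, or \<open>w X\<^sub>2 \<pi>\<close> a plane through \<open>u\<close>,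
  that the common centralizer preserves. If both vanish, \<open>X\<^sub>2\<close> would commute with \<open>X\<^sub>1\<close>.\<close>

lemma scalar_plus_rank_one_flag:
  fixes X1 :: "'a::field mat3"
  assumes X1: "X1 = scalar_mat l + outer u w" and uw: "u \<noteq> 0" "w \<noteq> 0" and "X1 * X2 \<noteq> X2 * X1"
  obtains p z where "p \<noteq> 0" "z \<noteq> 0" "dot z p = 0"
    "\<And>Y. X1 * Y = Y * X1 \<Longrightarrow> X2 * Y = Y * X2 \<Longrightarrow> preserves_flag p z Y"
proof -
  have eigen: "\<exists>\<alpha>. mat_vec Y u = vscale \<alpha> u \<and> vec_mat w Y = vscale \<alpha> w" if "X1 * Y = Y * X1" for Y
    using commute_scalar_plus_outer[OF that[unfolded X1] uw] by metis
  show ?thesis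
  proof (cases "dot w u = 0")
    case True
    show ?thesis
      by (rule that[OF uw True]) (use eigen in \<open>auto simp: preserves_flag_def\<close>)
  next
    case False
    define \<pi> where "\<pi> = 1 - scalar_mat (1 / dot w u) * outer u w"
    have \<pi>_commute: "Y * \<pi> = \<pi> * Y" if "X1 * Y = Y * X1" for Y
    proof -
      have "Y * outer u w = outer u w * Y"
        using that by (simp add: X1 algebra_simps scalar_mat_commute)
      then have "Y * (scalar_mat k * outer u w) = scalar_mat k * (outer u w * Y)" for k
        by (metis mult.assoc scalar_mat_commute)
      then show ?thesis
        unfolding \<pi>_def by (simp add: right_diff_distrib left_diff_distrib mult.assoc)
    qed
    have w\<pi>: "vec_mat w \<pi> = 0" and \<pi>u: "mat_vec \<pi> u = 0"
      using False by (simp_all add: \<pi>_def vec_mat_diff mat_vec_diff vec_mat_mult mat_vec_mult vec_mat_outer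
          mat_vec_outer vec_mat_scalar_mat mat_vec_scalar_mat vscale_vscale dot_vscale dot_commute)
    define q where "q = mat_vec (\<pi> * X2) u"
    define r where "r = vec_mat w (X2 * \<pi>)"
    have "dot w q = 0"
      unfolding q_def mat_vec_mult dot_mat_vec w\<pi> by simp
    have "dot r u = 0"
      unfolding r_def vec_mat_mult dot_mat_vec[symmetric] \<pi>u by simp
    have q_eigen: "mat_vec Y q = vscale \<alpha> q" and r_eigen: "vec_mat r Y = vscale \<alpha> r"
      if "X1 * Y = Y * X1" "X2 * Y = Y * X2" "mat_vec Y u = vscale \<alpha> u" "vec_mat w Y = vscale \<alpha> w" for Y \<alpha>
    proof -
      have "Y * (\<pi> * X2) = \<pi> * X2 * Y" "X2 * \<pi> * Y = Y * (X2 * \<pi>)"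
        using \<pi>_commute[OF that(1)] that(2) by (metis mult.assoc)+
      then show "mat_vec Y q = vscale \<alpha> q" "vec_mat r Y = vscale \<alpha> r"
        unfolding q_def r_def using that(3,4)
        by (metis mat_vec_mult mat_vec_vscale, metis vec_mat_mult vec_mat_vscale)
    qed
    consider "q \<noteq> 0" | "r \<noteq> 0" | "q = 0" "r = 0" by blast
    then show ?thesis
    proof cases
      case 1
      show ?thesis
      proof (rule that[OF 1 uw(2) \<open>dot w q = 0\<close>])
        fix Y assume Y: "X1 * Y = Y * X1" "X2 * Y = Y * X2"
        then obtain \<alpha> where "mat_vec Y u = vscale \<alpha> u" "vec_mat w Y = vscale \<alpha> w"
          using eigen by blast
        with q_eigen[OF Y] show "preserves_flag q w Y"
          unfolding preserves_flag_def by blast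
      qed
    next
      case 2
      show ?thesis
      proof (rule that[OF uw(1) 2 \<open>dot r u = 0\<close>])
        fix Y assume Y: "X1 * Y = Y * X1" "X2 * Y = Y * X2"
        then obtain \<alpha> where "mat_vec Y u = vscale \<alpha> u" "vec_mat w Y = vscale \<alpha> w"
          using eigen by blast
        with r_eigen[OF Y] show "preserves_flag u r Y"
          unfolding preserves_flag_def by blast
      qed
    next
      case 3
      define \<kappa> where "\<kappa> = dot w (mat_vec X2 u) / dot w u"
      have "q = mat_vec X2 u - vscale \<kappa> u" "r = vec_mat w X2 - vscale \<kappa> w"
        unfolding q_def r_def \<pi>_def \<kappa>_def
        by (simp_all add: algebra_simps mat_vec_mult mat_vec_diff vec_mat_mult vec_mat_diff mat_vec_outer
            vec_mat_outer mat_vec_scalar_mat vec_mat_scalar_mat vscale_vscale dot_vscale dot_mat_vec)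
      with 3 have "mat_vec X2 u = vscale \<kappa> u" "vec_mat w X2 = vscale \<kappa> w"
        by simp_all
      then have "X2 * outer u w = outer u w * X2"
        by (simp add: mult_outer outer_mult outer_vscale)
      then have "X1 * X2 = X2 * X1"
        unfolding X1 by (simp add: algebra_simps scalar_mat_commute)
      with assms(4) show ?thesis
        by simp
    qed
  qed
qed

definition square_config :: "'a::comm_ring_1 mat3 \<Rightarrow> 'a mat3 \<Rightarrow> 'a mat3 \<Rightarrow> 'a mat3 \<Rightarrow> bool" where
  "square_config X1 X2 Y1 Y2 \<longleftrightarrow>
     X1 * Y1 = Y1 * X1 \<and> X1 * Y2 = Y2 * X1 \<and> X2 * Y1 = Y1 * X2 \<and> X2 * Y2 = Y2 * X2 \<and>
     X1 * X2 \<noteq> X2 * X1 \<and> Y1 * Y2 \<noteq> Y2 * Y1"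

lemma square_config_conj:
  assumes "P * Q = 1" "square_config X1 X2 Y1 Y2"
  shows "square_config (Q * X1 * P) (Q * X2 * P) (Q * Y1 * P) (Q * Y2 * P)"
  using assms(2) unfolding square_config_def conj_mult[OF assms(1)] conj_eq_iff[OF assms(1)] .

lemma square_config_scalar_plus_outer:
  fixes l :: "'a::field"
  assumes "square_config (scalar_mat l + outer u w) X2 Y1 Y2"
  shows "simult_triangularizable Y1 Y2"
proof (cases "u = 0 \<or> w = 0")
  case True
  then have "outer u w = 0"
    by (cases u; cases w) (auto simp: zero_vec3_def zero_mat3_def)
  with assms show ?thesis
    by (simp add: square_config_def scalar_mat_commute)
next
  case False
  with assms obtain p z where "p \<noteq> 0" "z \<noteq> 0" "dot z p = 0"
    "\<And>Y. (scalar_mat l + outer u w) * Y = Y * (scalar_mat l + outer u w) \<Longrightarrow> X2 * Y = Y * X2 \<Longrightarrow> preserves_flag p z Y"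
    using scalar_plus_rank_one_flag[of "scalar_mat l + outer u w" l u w X2] unfolding square_config_def by blast
  with assms show ?thesis
    by (intro simult_triangularizable_flag) (auto simp: square_config_def)
qed

theorem square_config_simult_triangularizable:
  fixes X1 :: "'a::alg_closed_field mat3"
  assumes "square_config X1 X2 Y1 Y2"
  shows "simult_triangularizable Y1 Y2"
proof -
  obtain P Q where PQ: "P * Q = 1" "Q * P = 1" and upper: "upper_triangular3 (Q * X1 * P)"
    by (rule conj_upper_triangular3)
  obtain P' Q' a b c d e f where P'Q': "P' * Q' = 1" "Q' * P' = 1"
      and normal: "Q' * (Q * X1 * P) * P' = Mat3 a b c 0 d e 0 0 f"
        "a \<noteq> d \<Longrightarrow> b = 0" "a \<noteq> f \<Longrightarrow> c = 0" "d \<noteq> f \<Longrightarrow> e = 0"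
    using upper_triangular3_conj_normal[OF upper] by blast
  define P'' Q'' where "P'' = P * P'" and "Q'' = Q' * Q"
  have P''Q'': "P'' * Q'' = 1" "Q'' * P'' = 1"
    unfolding P''_def Q''_def using PQ P'Q' by (simp_all add: inverse_pair_mult)
  have conj_X1: "Q'' * X1 * P'' = Mat3 a b c 0 d e 0 0 f"
    using normal(1) unfolding P''_def Q''_def by (simp add: mult.assoc)
  have config: "square_config (Q'' * X1 * P'') (Q'' * X2 * P'') (Q'' * Y1 * P'') (Q'' * Y2 * P'')"
    using square_config_conj[OF P''Q''(1) assms] .
  have "simult_triangularizable (Q'' * Y1 * P'') (Q'' * Y2 * P'')"
  proof (cases "abelian_centralizer (Q'' * X1 * P'')")
    case True
    with config show ?thesis
      unfolding abelian_centralizer_def square_config_def by blast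
  next
    case False
    then obtain l u w where "Q'' * X1 * P'' = scalar_mat l + outer u w"
      using normal_form_rank_one_or_abelian_centralizer[of a d b f c e, OF normal(2-4)] conj_X1 by auto
    with config show ?thesis
      using square_config_scalar_plus_outer by metis
  qed
  with P''Q'' show ?thesis
    by (rule simult_triangularizable_conj)
qed

section \<open>Words in a right-angled Artin group\<close>

definition sanov_a :: "int mat3" where "sanov_a = Mat3 1 2 0 0 1 0 0 0 1"
definition sanov_a_inv :: "int mat3" where "sanov_a_inv = Mat3 1 (-2) 0 0 1 0 0 0 1"
definition sanov_b :: "int mat3" where "sanov_b = Mat3 1 0 0 2 1 0 0 0 1"
definition sanov_b_inv :: "int mat3" where "sanov_b_inv = Mat3 1 0 0 (-2) 1 0 0 0 1"

lemmas sanov_defs = sanov_a_def sanov_a_inv_def sanov_b_def sanov_b_inv_def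

lemma sanov_inverse: "sanov_a * sanov_a_inv = 1" "sanov_a_inv * sanov_a = 1"
    "sanov_b * sanov_b_inv = 1" "sanov_b_inv * sanov_b = 1"
  by (simp_all add: sanov_defs one_mat3_def)

lemma sanov_not_commute: "sanov_a * sanov_b \<noteq> sanov_b * sanov_a"
  by (simp add: sanov_defs)

lemma triangular_law_sanov: "triangular_law (*) sanov_a sanov_a_inv sanov_b sanov_b_inv \<noteq> 1"
  by (simp add: triangular_law_def commutator_def sanov_defs one_mat3_def)

lemma words_append [simp]: "x @ y \<in> words V \<longleftrightarrow> x \<in> words V \<and> y \<in> words V"
  by (auto simp: words_def)

lemma Nil_in_words [simp]: "[] \<in> words V"
  by (simp add: words_def)

lemma Cons_in_words [simp]: "(v, b) # w \<in> words V \<longleftrightarrow> v \<in> V \<and> w \<in> words V"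
  by (simp add: words_def)

lemma raag_eq_words: "(x, y) \<in> raag_eq V E \<Longrightarrow> x \<in> words V \<and> y \<in> words V"
  by (induction rule: raag_eq.induct) auto

lemma raag_eq_append_right:
  "(x, y) \<in> raag_eq V E \<Longrightarrow> z \<in> words V \<Longrightarrow> (x @ z, y @ z) \<in> raag_eq V E"
proof (induction rule: raag_eq.induct)
  case (cancel xs ys v b)
  then show ?case using raag_eq.cancel[of xs V "ys @ z" v b E] by simp
next
  case (commute xs ys u v b c)
  then show ?case using raag_eq.commute[of xs V "ys @ z" u v E b c] by simp
qed (auto intro: raag_eq.refl raag_eq.sym raag_eq.trans)

lemma raag_eq_append_left:
  "(x, y) \<in> raag_eq V E \<Longrightarrow> z \<in> words V \<Longrightarrow> (z @ x, z @ y) \<in> raag_eq V E"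
proof (induction rule: raag_eq.induct)
  case (cancel xs ys v b)
  then show ?case using raag_eq.cancel[of "z @ xs" V ys v b E] by simp
next
  case (commute xs ys u v b c)
  then show ?case using raag_eq.commute[of "z @ xs" V ys u v E b c] by simp
qed (auto intro: raag_eq.refl raag_eq.sym raag_eq.trans)

lemma raag_eq_commute_letters:
  "u \<in> V \<Longrightarrow> v \<in> V \<Longrightarrow> E u v \<Longrightarrow> ([(u, True), (v, True)], [(v, True), (u, True)]) \<in> raag_eq V E"
  using raag_eq.commute[of "[]" V "[]" u v E True True] by simp

lemma raag_eq_cancel_letter: "v \<in> V \<Longrightarrow> ([(v, b), (v, \<not> b)], []) \<in> raag_eq V E"
  using raag_eq.cancel[of "[]" V "[]" v b E] by simp

definition raag_class :: "'a set \<Rightarrow> ('a \<Rightarrow> 'a \<Rightarrow> bool) \<Rightarrow> 'a word \<Rightarrow> 'a word set" where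
  "raag_class V E w = raag_eq V E `` {w}"

lemma raag_class_in_carrier: "w \<in> words V \<Longrightarrow> raag_class V E w \<in> carrier (RAAG V E)"
  by (auto simp: RAAG_def raag_class_def quotient_def)

lemma raag_class_eq_iff:
  assumes "x \<in> words V"
  shows "raag_class V E x = raag_class V E y \<longleftrightarrow> (x, y) \<in> raag_eq V E"
proof
  assume "raag_class V E x = raag_class V E y"
  moreover have "x \<in> raag_class V E x"
    using assms by (simp add: raag_class_def raag_eq.refl)
  ultimately show "(x, y) \<in> raag_eq V E"
    by (auto simp: raag_class_def intro: raag_eq.sym)
next
  assume "(x, y) \<in> raag_eq V E"
  then show "raag_class V E x = raag_class V E y"
    unfolding raag_class_def by (auto intro: raag_eq.trans raag_eq.sym)
qed

lemma raag_class_mult: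
  assumes "x \<in> words V" "y \<in> words V"
  shows "raag_class V E x \<otimes>\<^bsub>RAAG V E\<^esub> raag_class V E y = raag_class V E (x @ y)"
proof -
  define x' where "x' = (SOME x'. x' \<in> raag_class V E x)"
  define y' where "y' = (SOME y'. y' \<in> raag_class V E y)"
  have "x \<in> raag_class V E x" "y \<in> raag_class V E y"
    using assms by (simp_all add: raag_class_def raag_eq.refl)
  then have "x' \<in> raag_class V E x" "y' \<in> raag_class V E y"
    unfolding x'_def y'_def by (metis someI)+
  then have x': "(x, x') \<in> raag_eq V E" and y': "(y, y') \<in> raag_eq V E"
    by (simp_all add: raag_class_def)
  have "(x @ y, x' @ y) \<in> raag_eq V E"
    using raag_eq_append_right[OF x' assms(2)] .
  moreover have "(x' @ y, x' @ y') \<in> raag_eq V E"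
    using raag_eq_append_left[OF y'] raag_eq_words[OF x'] by blast
  ultimately have "(x @ y, x' @ y') \<in> raag_eq V E"
    by (rule raag_eq.trans)
  then have "raag_class V E (x' @ y') = raag_class V E (x @ y)"
    using raag_class_eq_iff[of "x @ y" V E "x' @ y'"] assms by auto
  then show ?thesis
    by (simp add: RAAG_def x'_def y'_def raag_class_def)
qed

fun sanov_letter :: "'a \<Rightarrow> 'a \<Rightarrow> 'a \<times> bool \<Rightarrow> int mat3" where
  "sanov_letter x y (v, b) =
     (if v = x then (if b then sanov_a else sanov_a_inv)
      else if v = y then (if b then sanov_b else sanov_b_inv) else 1)"

lemma sanov_letter_cancel: "sanov_letter x y (v, b) * sanov_letter x y (v, \<not> b) = 1"
  by (cases b) (simp_all add: sanov_inverse)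

lemma sanov_letter_raag_eq:
  assumes "(w, w') \<in> raag_eq V E" "\<not> E x y" "\<not> E y x" "\<forall>u\<in>V. \<not> E u u"
  shows "(\<Prod>l\<leftarrow>w. sanov_letter x y l) = (\<Prod>l\<leftarrow>w'. sanov_letter x y l)"
  using assms(1)
proof (induction rule: raag_eq.induct)
  case (cancel xs ys v b)
  then show ?case
    using sanov_letter_cancel[of x y v b] by (simp add: mult.assoc mult_inverse_cancel_left del: sanov_letter.simps)
next
  case (commute xs ys u v b c)
  then have "u \<noteq> v" using assms(4) by auto
  with commute.hyps(5) assms(2,3) have "sanov_letter x y (u, b) = 1 \<or> sanov_letter x y (v, c) = 1"
    by auto
  then have "sanov_letter x y (u, b) * sanov_letter x y (v, c) = sanov_letter x y (v, c) * sanov_letter x y (u, b)"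
    by (auto simp del: sanov_letter.simps)
  then show ?case
    by (simp add: mult.assoc[symmetric] del: sanov_letter.simps)
qed auto

lemma not_raag_eq_swap_letters:
  assumes "x \<noteq> y" "\<not> E x y" "\<not> E y x" "\<forall>u\<in>V. \<not> E u u"
  shows "([(x, True), (y, True)], [(y, True), (x, True)]) \<notin> raag_eq V E"
  using sanov_letter_raag_eq[where x = x and y = y and V = V and E = E, OF _ assms(2-4)] sanov_not_commute assms(1) by fastforce

lemma not_raag_eq_triangular_law:
  assumes "x \<noteq> y" "\<not> E x y" "\<not> E y x" "\<forall>u\<in>V. \<not> E u u"
  shows "(triangular_law (@) [(x, True)] [(x, False)] [(y, True)] [(y, False)], []) \<notin> raag_eq V E"
proof
  let ?F = "\<lambda>w. \<Prod>l\<leftarrow>w. sanov_letter x y l"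
  assume "(triangular_law (@) [(x, True)] [(x, False)] [(y, True)] [(y, False)], []) \<in> raag_eq V E"
  then have "?F (triangular_law (@) [(x, True)] [(x, False)] [(y, True)] [(y, False)]) = 1"
    using sanov_letter_raag_eq[where x = x and y = y and V = V and E = E, OF _ assms(2-4)] by fastforce
  moreover have "?F (triangular_law (@) [(x, True)] [(x, False)] [(y, True)] [(y, False)]) =
      triangular_law (*) sanov_a sanov_a_inv sanov_b sanov_b_inv"
    using triangular_law_hom[of UNIV "(@)" ?F "(*)"] assms(1) by simp
  ultimately show False
    using triangular_law_sanov by simp
qed

section \<open>Faithful representations\<close>

definition faithful_word_rep :: "'a set \<Rightarrow> ('a \<Rightarrow> 'a \<Rightarrow> bool) \<Rightarrow> ('a word \<Rightarrow> 'b::monoid_mult) \<Rightarrow> bool" where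
  "faithful_word_rep V E \<Phi> \<longleftrightarrow> \<Phi> [] = 1 \<and>
     (\<forall>x\<in>words V. \<forall>y\<in>words V. \<Phi> (x @ y) = \<Phi> x * \<Phi> y \<and> (\<Phi> x = \<Phi> y \<longleftrightarrow> (x, y) \<in> raag_eq V E))"

lemma faithful_word_rep_Nil: "faithful_word_rep V E \<Phi> \<Longrightarrow> \<Phi> [] = 1"
  by (simp add: faithful_word_rep_def)

lemma faithful_word_rep_append:
  "faithful_word_rep V E \<Phi> \<Longrightarrow> x \<in> words V \<Longrightarrow> y \<in> words V \<Longrightarrow> \<Phi> (x @ y) = \<Phi> x * \<Phi> y"
  by (simp add: faithful_word_rep_def)

lemma faithful_word_rep_eq_iff:
  "faithful_word_rep V E \<Phi> \<Longrightarrow> x \<in> words V \<Longrightarrow> y \<in> words V \<Longrightarrow> \<Phi> x = \<Phi> y \<longleftrightarrow> (x, y) \<in> raag_eq V E"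
  by (simp add: faithful_word_rep_def)

lemma faithful_word_rep_letter_inverse:
  assumes "faithful_word_rep V E \<Phi>" "v \<in> V"
  shows "\<Phi> [(v, b)] * \<Phi> [(v, \<not> b)] = 1"
proof -
  have "\<Phi> [(v, b)] * \<Phi> [(v, \<not> b)] = \<Phi> [(v, b), (v, \<not> b)]"
    using faithful_word_rep_append[OF assms(1), of "[(v, b)]" "[(v, \<not> b)]"] assms(2) by simp
  also have "\<dots> = \<Phi> []"
    using faithful_word_rep_eq_iff[OF assms(1)] raag_eq_cancel_letter[OF assms(2)] assms(2) by simp
  finally show ?thesis
    using faithful_word_rep_Nil[OF assms(1)] by simp
qed

lemma faithful_word_rep_letters_commute_iff:
  assumes "faithful_word_rep V E \<Phi>" "simple_graph V E" "u \<in> V" "v \<in> V" "u \<noteq> v"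
  shows "\<Phi> [(u, True)] * \<Phi> [(v, True)] = \<Phi> [(v, True)] * \<Phi> [(u, True)] \<longleftrightarrow> E u v"
proof -
  have "\<Phi> [(u, True)] * \<Phi> [(v, True)] = \<Phi> [(v, True)] * \<Phi> [(u, True)] \<longleftrightarrow>
      \<Phi> [(u, True), (v, True)] = \<Phi> [(v, True), (u, True)]"
    using faithful_word_rep_append[OF assms(1), of "[(u, True)]" "[(v, True)]"]
      faithful_word_rep_append[OF assms(1), of "[(v, True)]" "[(u, True)]"] assms(3,4) by simp
  also have "\<dots> \<longleftrightarrow> ([(u, True), (v, True)], [(v, True), (u, True)]) \<in> raag_eq V E"
    using faithful_word_rep_eq_iff[OF assms(1)] assms(3,4) by simp
  also have "\<dots> \<longleftrightarrow> E u v"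
  proof
    assume swap: "([(u, True), (v, True)], [(v, True), (u, True)]) \<in> raag_eq V E"
    show "E u v"
    proof (rule ccontr)
      assume "\<not> E u v"
      moreover have "\<not> E v u" "\<forall>w\<in>V. \<not> E w w"
        using assms(2-4) \<open>\<not> E u v\<close> unfolding simple_graph_def by blast+
      ultimately show False
        using not_raag_eq_swap_letters[OF assms(5)] swap by blast
    qed
  qed (rule raag_eq_commute_letters[OF assms(3,4)])
  finally show ?thesis .
qed

lemma faithful_word_rep_triangular_law:
  assumes "faithful_word_rep V E \<Phi>" "simple_graph V E" "u \<in> V" "v \<in> V" "u \<noteq> v" "\<not> E u v"
  shows "triangular_law (*) (\<Phi> [(u, True)]) (\<Phi> [(u, False)]) (\<Phi> [(v, True)]) (\<Phi> [(v, False)]) \<noteq> 1"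
proof
  let ?law = "triangular_law (@) [(u, True)] [(u, False)] [(v, True)] [(v, False)]"
  have hom: "\<Phi> ?law = triangular_law (*) (\<Phi> [(u, True)]) (\<Phi> [(u, False)]) (\<Phi> [(v, True)]) (\<Phi> [(v, False)])"
    by (rule triangular_law_hom[of "words V"]) (simp_all add: assms(3,4) faithful_word_rep_append[OF assms(1)])
  have law_word: "?law \<in> words V"
    by (rule triangular_law_closed) (simp_all add: assms(3,4))
  assume "triangular_law (*) (\<Phi> [(u, True)]) (\<Phi> [(u, False)]) (\<Phi> [(v, True)]) (\<Phi> [(v, False)]) = 1"
  then have "(?law, []) \<in> raag_eq V E"
    using hom faithful_word_rep_eq_iff[OF assms(1) law_word Nil_in_words] faithful_word_rep_Nil[OF assms(1)]
    by simp
  moreover have "\<not> E v u" "\<forall>w\<in>V. \<not> E w w"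
    using assms(2-4,6) unfolding simple_graph_def by blast+
  ultimately show False
    using not_raag_eq_triangular_law[of u v E V, OF assms(5,6)] by blast
qed

lemma faithful_word_rep_induced_square:
  assumes \<Phi>: "faithful_word_rep V E \<Phi>" and "simple_graph V E"
    and V: "a \<in> V" "b \<in> V" "c \<in> V" "e \<in> V"
    and "distinct [a, b, c, e]" "E a b" "E b c" "E c e" "E e a" "\<not> E a c" "\<not> E b e"
  shows "square_config (\<Phi> [(a, True)]) (\<Phi> [(c, True)]) (\<Phi> [(b, True)]) (\<Phi> [(e, True)])"
proof -
  have commute: "\<Phi> [(u, True)] * \<Phi> [(v, True)] = \<Phi> [(v, True)] * \<Phi> [(u, True)] \<longleftrightarrow> E u v"
    if "u \<in> {a, b, c, e}" "v \<in> {a, b, c, e}" "u \<noteq> v" for u v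
    using faithful_word_rep_letters_commute_iff[OF \<Phi> assms(2)] V that by blast
  have "E a e" "E c b"
    using assms(2) V \<open>E e a\<close> \<open>E b c\<close> unfolding simple_graph_def by blast+
  then show "square_config (\<Phi> [(a, True)]) (\<Phi> [(c, True)]) (\<Phi> [(b, True)]) (\<Phi> [(e, True)])"
    unfolding square_config_def
    using commute[of a b] commute[of a e] commute[of c b] commute[of c e] commute[of a c] commute[of b e]
      \<open>distinct [a, b, c, e]\<close> \<open>E a b\<close> \<open>E c e\<close> \<open>\<not> E a c\<close> \<open>\<not> E b e\<close> by auto
qed

definition embed_entry :: "nat \<Rightarrow> 'f::field mat \<Rightarrow> nat \<Rightarrow> nat \<Rightarrow> 'f alg_closure" where
  "embed_entry d M i j = (if i < d \<and> j < d then to_ac (M $$ (i, j)) else if i = j then 1 else 0)"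

definition mat3_of_fun :: "(nat \<Rightarrow> nat \<Rightarrow> 'a::comm_ring_1) \<Rightarrow> 'a mat3" where
  "mat3_of_fun f = Mat3 (f 0 0) (f 0 1) (f 0 2) (f 1 0) (f 1 1) (f 1 2) (f 2 0) (f 2 1) (f 2 2)"

definition embed3 :: "nat \<Rightarrow> 'f::field mat \<Rightarrow> 'f alg_closure mat3" where
  "embed3 d M = mat3_of_fun (embed_entry d M)"

lemma mat3_of_fun_mult: "mat3_of_fun f * mat3_of_fun g = mat3_of_fun (\<lambda>i j. \<Sum>k<3. f i k * g k j)"
  by (simp add: mat3_of_fun_def eval_nat_numeral lessThan_Suc ac_simps)

lemma mat3_of_fun_eq_iff: "mat3_of_fun f = mat3_of_fun g \<longleftrightarrow> (\<forall>i<3. \<forall>j<3. f i j = g i j)"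
  by (auto simp: mat3_of_fun_def less_Suc_eq numeral_eq_Suc)

lemma embed_entry_mult:
  fixes M :: "'f::field mat"
  assumes M: "M \<in> carrier_mat d d" and N: "N \<in> carrier_mat d d" and "d \<le> 3" "i < 3" "j < 3"
  shows "embed_entry d (M * N) i j = (\<Sum>k<3. embed_entry d M i k * embed_entry d N k j)"
proof (cases "i < d \<and> j < d")
  case True
  have "embed_entry d (M * N) i j = (\<Sum>k\<in>{0..<d}. to_ac (M $$ (i, k)) * to_ac (N $$ (k, j)))"
    using True M N by (simp add: embed_entry_def scalar_prod_def to_ac_sum)
  also have "\<dots> = (\<Sum>k\<in>{0..<d}. embed_entry d M i k * embed_entry d N k j)"
    using True by (intro sum.cong) (auto simp: embed_entry_def)
  also have "\<dots> = (\<Sum>k<3. embed_entry d M i k * embed_entry d N k j)"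
    using True assms(3) by (intro sum.mono_neutral_left) (auto simp: embed_entry_def)
  finally show ?thesis .
next
  case False
  then consider "i < d" "\<not> j < d" | "\<not> i < d" by blast
  then show ?thesis
  proof cases
    case 1
    then have "(\<Sum>k<3. embed_entry d M i k * embed_entry d N k j) = (\<Sum>k<3. if k = j then embed_entry d M i k else 0)"
      by (intro sum.cong) (auto simp: embed_entry_def)
    with 1 assms(5) show ?thesis
      by (simp add: embed_entry_def)
  next
    case 2
    then have "(\<Sum>k<3. embed_entry d M i k * embed_entry d N k j) = (\<Sum>k<3. if i = k then embed_entry d N k j else 0)"
      by (intro sum.cong) (auto simp: embed_entry_def)
    with 2 assms(4) show ?thesis
      by (simp add: embed_entry_def)
  qed
qed

lemma embed3_mult:
  fixes M :: "'f::field mat"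
  assumes "M \<in> carrier_mat d d" "N \<in> carrier_mat d d" "d \<le> 3"
  shows "embed3 d (M * N) = embed3 d M * embed3 d N"
  unfolding embed3_def mat3_of_fun_mult mat3_of_fun_eq_iff using embed_entry_mult[OF assms] by blast

lemma embed3_one: "d \<le> 3 \<Longrightarrow> embed3 d (1\<^sub>m d :: 'f::field mat) = 1"
  by (auto simp: embed3_def mat3_of_fun_def embed_entry_def one_mat3_def)

lemma embed3_inj:
  fixes M :: "'f::field mat"
  assumes "M \<in> carrier_mat d d" "N \<in> carrier_mat d d" "d \<le> 3" "embed3 d M = embed3 d N"
  shows "M = N"
proof (rule eq_matI)
  fix i j assume "i < dim_row N" "j < dim_col N"
  with assms have "i < d" "j < d" "embed_entry d M i j = embed_entry d N i j"
    unfolding embed3_def mat3_of_fun_eq_iff by auto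
  then show "M $$ (i, j) = N $$ (i, j)"
    by (simp add: embed_entry_def)
qed (use assms in auto)

lemma carrier_GL: "carrier (GL d TYPE('f::field)) = Units (ring_mat TYPE('f) d ())"
  by (simp add: GL_def units_of_def)

lemma mult_GL: "mult (GL d TYPE('f::field)) = (*)"
  by (simp add: GL_def units_of_def ring_mat_simps)

lemma Units_ring_mat_idem:
  fixes A :: "'f::field mat"
  assumes "A \<in> Units (ring_mat TYPE('f) d ())" "A * A = A"
  shows "A = 1\<^sub>m d"
proof -
  obtain N where N: "N \<in> carrier_mat d d" "N * A = 1\<^sub>m d" and A: "A \<in> carrier_mat d d"
    using assms(1) unfolding Units_def by (auto simp: ring_mat_simps)
  have "A = (N * A) * A"
    using A N(2) by simp
  also have "\<dots> = N * (A * A)"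
    by (rule assoc_mult_mat[OF N(1) A A])
  finally show ?thesis
    using assms(2) N by simp
qed

lemma GL_rep_faithful_word_rep:
  fixes h :: "'a word set \<Rightarrow> 'f::field mat"
  assumes "d \<le> 3" "h \<in> hom (RAAG V E) (GL d TYPE('f))" "inj_on h (carrier (RAAG V E))"
  shows "faithful_word_rep V E (\<lambda>w. embed3 d (h (raag_class V E w)))"
proof -
  define H where "H w = h (raag_class V E w)" for w
  have unit: "H w \<in> Units (ring_mat TYPE('f) d ())" if "w \<in> words V" for w
    using assms(2) raag_class_in_carrier[OF that] unfolding H_def hom_def carrier_GL by auto
  then have carrier: "H w \<in> carrier_mat d d" if "w \<in> words V" for w
    using that unfolding Units_def by (simp add: ring_mat_simps)
  have mult: "H (x @ y) = H x * H y" if "x \<in> words V" "y \<in> words V" for x y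
    using assms(2) raag_class_in_carrier that
    unfolding H_def raag_class_mult[OF that, symmetric] hom_def mult_GL by blast
  have "H [] = 1\<^sub>m d"
    using Units_ring_mat_idem[OF unit] mult[of "[]" "[]"] by simp
  moreover have "H x = H y \<longleftrightarrow> (x, y) \<in> raag_eq V E" if "x \<in> words V" "y \<in> words V" for x y
    using assms(3) raag_class_in_carrier[OF that(1)] raag_class_in_carrier[OF that(2)]
      raag_class_eq_iff[OF that(1)]
    unfolding H_def inj_on_def by metis
  ultimately show ?thesis
    unfolding faithful_word_rep_def H_def[symmetric]
    using embed3_mult[OF carrier carrier assms(1)] embed3_one[OF assms(1)] embed3_inj[OF carrier carrier assms(1)] mult
    by (metis Nil_in_words)
qed

theorem theorem3p2:
  fixes V :: "'a set" and E :: "'a \<Rightarrow> 'a \<Rightarrow> bool"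
    and d :: nat and h :: "'a word set \<Rightarrow> 'f::field mat"
  assumes "simple_graph V E"
    and "d \<le> 3"
    and "h \<in> hom (RAAG V E) (GL d TYPE('f))"
    and "inj_on h (carrier (RAAG V E))"
  shows "\<not> has_induced_square V E"
proof
  assume "has_induced_square V E"
  then obtain a b c e where V: "a \<in> V" "b \<in> V" "c \<in> V" "e \<in> V"
    and square: "distinct [a, b, c, e]" "E a b" "E b c" "E c e" "E e a" "\<not> E a c" "\<not> E b e"
    unfolding has_induced_square_def by blast
  define \<Phi> where "\<Phi> w = embed3 d (h (raag_class V E w))" for w
  have \<Phi>: "faithful_word_rep V E \<Phi>"
    unfolding \<Phi>_def using GL_rep_faithful_word_rep[OF assms(2-4)] .
  have "square_config (\<Phi> [(a, True)]) (\<Phi> [(c, True)]) (\<Phi> [(b, True)]) (\<Phi> [(e, True)])"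
    by (rule faithful_word_rep_induced_square[OF \<Phi> assms(1) V square])
  then have "simult_triangularizable (\<Phi> [(b, True)]) (\<Phi> [(e, True)])"
    by (rule square_config_simult_triangularizable)
  then have "triangular_law (*) (\<Phi> [(b, True)]) (\<Phi> [(b, False)]) (\<Phi> [(e, True)]) (\<Phi> [(e, False)]) = 1"
    using faithful_word_rep_letter_inverse[OF \<Phi> V(2), of True] faithful_word_rep_letter_inverse[OF \<Phi> V(2), of False]
      faithful_word_rep_letter_inverse[OF \<Phi> V(4), of True] faithful_word_rep_letter_inverse[OF \<Phi> V(4), of False]
    by (intro triangular_law_simult_triangularizable) simp_all
  with faithful_word_rep_triangular_law[OF \<Phi> assms(1)] V square
  show False by auto
qed

end
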